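(* Let $V$ be a finite set and $\{\eta(t),t\ge0\}$ a consistent configuration process on $\Omega$. Then for all $\eta,\xi\in\Omega$ with $1\le|\xi|<|\eta|$ and all $t\ge0$, $$\mathbb E_\eta[F(\xi,\eta(t))]=\frac{1}{|\eta|-|\xi|}\sum_{i\in V}\eta_i\,\mathbb E_{\eta-\delta_i}[F(\xi,\eta(t))].$$
   Context: $\Lambda\subseteq\mathbb N_0$, $\Omega=\{\eta\in\Lambda^V:|\eta|<\infty\}$ with $|\eta|=\sum_x\eta_x$; $\delta_z$ is the configuration with one particle at $z$. $F(\xi,\eta):=\prod_{j\in V}\binom{\eta_j}{\xi_j}$ (with $\binom{a}{b}=0$ for $b>a$). A configuration process is a particle-number-conserving Markov process on $\Omega$ with generator $\mathcal L$; $\mathbb E_\eta$ is expectation started from $\eta$. It is consistent if $[\mathcal L,\mathcal A]=0$, where $\mathcal Af(\eta)=\sum_{x\in V}\eta_xf(\eta-\delta_x)$ (terms with $\eta_x=0$ vanish). *)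

theory Defs
  imports Complex_Main
begin

text \<open>Sites V are a finite type 'v; configurations are functions 'v \<Rightarrow> nat.
  The single-site state space is Lambda (a set of naturals).\<close>

definition Omega :: "nat set \<Rightarrow> ('v \<Rightarrow> nat) set" where
  "Omega Lam = {eta. (\<forall>x. eta x \<in> Lam) \<and> finite {x. eta x \<noteq> 0}}"

definition cnt :: "('v::finite \<Rightarrow> nat) \<Rightarrow> nat" where
  "cnt eta = (\<Sum>x\<in>UNIV. eta x)"

definition delta :: "'v \<Rightarrow> ('v \<Rightarrow> nat)" where
  "delta z = (\<lambda>x. if x = z then 1 else 0)"

definition Fdual :: "('v::finite \<Rightarrow> nat) \<Rightarrow> ('v \<Rightarrow> nat) \<Rightarrow> real" where
  "Fdual xi eta = (\<Prod>j\<in>UNIV. real (eta j choose xi j))"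

definition gen :: "nat set \<Rightarrow> (('v::finite \<Rightarrow> nat) \<Rightarrow> ('v \<Rightarrow> nat) \<Rightarrow> real)
    \<Rightarrow> (('v \<Rightarrow> nat) \<Rightarrow> real) \<Rightarrow> ('v \<Rightarrow> nat) \<Rightarrow> real" where
  "gen Lam q f eta = (\<Sum>zeta\<in>{zeta\<in>Omega Lam. cnt zeta = cnt eta}. q eta zeta * (f zeta - f eta))"

definition configuration_process :: "nat set \<Rightarrow> (('v::finite \<Rightarrow> nat) \<Rightarrow> ('v \<Rightarrow> nat) \<Rightarrow> real) \<Rightarrow> bool" where
  "configuration_process Lam q \<longleftrightarrow>
     (\<forall>eta\<in>Omega Lam. \<forall>zeta\<in>Omega Lam. eta \<noteq> zeta \<longrightarrow> q eta zeta \<ge> 0)"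

definition annih :: "(('v::finite \<Rightarrow> nat) \<Rightarrow> real) \<Rightarrow> ('v \<Rightarrow> nat) \<Rightarrow> real" where
  "annih f eta = (\<Sum>x\<in>UNIV. real (eta x) * f (eta - delta x))"

definition consistent :: "nat set \<Rightarrow> (('v::finite \<Rightarrow> nat) \<Rightarrow> ('v \<Rightarrow> nat) \<Rightarrow> real) \<Rightarrow> bool" where
  "consistent Lam q \<longleftrightarrow>
     (\<forall>f. \<forall>eta\<in>Omega Lam. gen Lam q (annih f) eta = annih (gen Lam q f) eta)"

text \<open>E_eta[f(eta(t))] = (exp(t L) f)(eta); L acts on the finite level set of eta.\<close>

definition expect :: "nat set \<Rightarrow> (('v::finite \<Rightarrow> nat) \<Rightarrow> ('v \<Rightarrow> nat) \<Rightarrow> real)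
    \<Rightarrow> real \<Rightarrow> (('v \<Rightarrow> nat) \<Rightarrow> real) \<Rightarrow> ('v \<Rightarrow> nat) \<Rightarrow> real" where
  "expect Lam q t f eta = (\<Sum>n. t ^ n / fact n * ((gen Lam q ^^ n) f) eta)"

end

theory Submission
  imports Defs "HOL-Library.FuncSet"
begin

text \<open>The annihilation operator \<open>A\<close> acts diagonally on the duality function,
  \<open>A F(\<xi>,\<cdot>)(\<zeta>) = (|\<zeta>| - |\<xi>|) F(\<xi>,\<zeta>)\<close>. The generator conserves the particle number,
  so it commutes with multiplication by any function of \<open>|\<zeta>|\<close>, and consistency makes it commute
  with \<open>A\<close>. Both commutations pass to the exponential series \<open>E\<^sub>\<eta>[f(\<eta>(t))] = (exp(t L) f)(\<eta>)\<close>,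
  which converges because every level set \<open>{\<zeta>. |\<zeta>| = c}\<close> is finite. Computing
  \<open>E\<^sub>\<eta>[A F(\<xi>,\<eta>(t))]\<close> in the two ways gives
  \<open>(|\<eta>| - |\<xi>|) E\<^sub>\<eta>[F(\<xi>,\<eta>(t))] = (\<Sum>i. \<eta>\<^sub>i E\<^bsub>\<eta>-\<delta>\<^sub>i\<^esub>[F(\<xi>,\<eta>(t))])\<close>.\<close>

lemma of_nat_mult_choose_pred:
  "real a * real ((a - 1) choose b) = (real a - real b) * real (a choose b)"
proof (cases "b \<le> a")
  case True
  have "real ((a - b) * (a choose b)) = real (a * ((a - 1) choose b))"
    by (simp only: binomial_absorb_comp)
  with True show ?thesis by (simp add: of_nat_diff)
next
  case False
  then show ?thesis by (simp add: binomial_eq_0)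
qed

lemma annih_Fdual: "annih (Fdual xi) z = (real (cnt z) - real (cnt xi)) * Fdual xi z"
proof -
  have site: "real (z x) * Fdual xi (z - delta x) = (real (z x) - real (xi x)) * Fdual xi z" for x
  proof -
    have rest: "(\<Prod>j\<in>UNIV - {x}. real ((z - delta x) j choose xi j))
        = (\<Prod>j\<in>UNIV - {x}. real (z j choose xi j))"
      by (rule prod.cong) (auto simp: delta_def)
    have "Fdual xi (z - delta x)
        = real ((z x - 1) choose xi x) * (\<Prod>j\<in>UNIV - {x}. real (z j choose xi j))"
      unfolding Fdual_def rest[symmetric]
      by (subst prod.remove[of UNIV x]) (auto simp: delta_def)
    moreover have "Fdual xi z = real (z x choose xi x) * (\<Prod>j\<in>UNIV - {x}. real (z j choose xi j))"
      unfolding Fdual_def by (subst prod.remove[of UNIV x]) auto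
    ultimately show ?thesis
      by (simp only: mult.assoc[symmetric] of_nat_mult_choose_pred)
  qed
  have "annih (Fdual xi) z = (\<Sum>x\<in>UNIV. (real (z x) - real (xi x)) * Fdual xi z)"
    unfolding annih_def by (simp only: site)
  then show ?thesis
    by (simp add: cnt_def sum_distrib_right[symmetric] sum_subtractf)
qed

lemma gen_mult_cnt: "gen Lam q (\<lambda>z. h (cnt z) * f z) e = h (cnt e) * gen Lam q f e"
  unfolding gen_def by (auto simp: sum_distrib_left algebra_simps intro!: sum.cong)

lemma funpow_gen_mult_cnt:
  "(gen Lam q ^^ n) (\<lambda>z. h (cnt z) * f z) = (\<lambda>z. h (cnt z) * (gen Lam q ^^ n) f z)"
  by (induction n) (auto simp: gen_mult_cnt)

lemma gen_cong_Omega: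
  assumes "\<And>z. z \<in> Omega Lam \<Longrightarrow> g z = g' z" and "e \<in> Omega Lam"
  shows "gen Lam q g e = gen Lam q g' e"
  unfolding gen_def using assms by (auto intro!: sum.cong)

lemma funpow_gen_annih:
  assumes "consistent Lam q" and "e \<in> Omega Lam"
  shows "(gen Lam q ^^ n) (annih f) e = annih ((gen Lam q ^^ n) f) e"
  using assms(2)
proof (induction n arbitrary: e)
  case 0
  then show ?case by simp
next
  case (Suc n)
  have "(gen Lam q ^^ Suc n) (annih f) e = gen Lam q (annih ((gen Lam q ^^ n) f)) e"
    using Suc by (auto intro: gen_cong_Omega)
  also have "\<dots> = annih ((gen Lam q ^^ Suc n) f) e"
    using assms(1) Suc.prems unfolding consistent_def by simp
  finally show ?case .
qed

definition level :: "nat \<Rightarrow> ('v::finite \<Rightarrow> nat) set" where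
  "level c = {z. cnt z = c}"

lemma finite_level: "finite (level c :: ('v::finite \<Rightarrow> nat) set)"
proof (rule finite_subset)
  show "level c \<subseteq> (Pi\<^sub>E UNIV (\<lambda>_. {..c}) :: ('v \<Rightarrow> nat) set)"
  proof
    fix z :: "'v \<Rightarrow> nat"
    assume "z \<in> level c"
    moreover have "z x \<le> cnt z" for x
      unfolding cnt_def by (rule member_le_sum) auto
    ultimately show "z \<in> Pi\<^sub>E UNIV (\<lambda>_. {..c})"
      by (auto simp: level_def PiE_UNIV_domain)
  qed
  show "finite (Pi\<^sub>E (UNIV :: 'v set) (\<lambda>_. {..c}))"
    by (rule finite_PiE) auto
qed

lemma sum_level_abs_gen_le:
  fixes q :: "('v::finite \<Rightarrow> nat) \<Rightarrow> ('v \<Rightarrow> nat) \<Rightarrow> real" and c :: nat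
  defines "K \<equiv> 2 * (\<Sum>z\<in>level c. \<Sum>w\<in>level c. \<bar>q z w\<bar>)"
  shows "(\<Sum>z\<in>level c. \<bar>gen Lam q g z\<bar>) \<le> K * (\<Sum>z\<in>level c. \<bar>g z\<bar>)"
proof -
  define B where "B = (\<Sum>z\<in>level c. \<bar>g z\<bar>)"
  have g_le: "\<bar>g z\<bar> \<le> B" if "z \<in> level c" for z
    unfolding B_def by (rule member_le_sum) (use that finite_level in auto)
  have "\<bar>gen Lam q g z\<bar> \<le> (\<Sum>w\<in>level c. \<bar>q z w\<bar>) * (2 * B)" if z: "z \<in> level c" for z
  proof -
    have "\<bar>gen Lam q g z\<bar> = \<bar>\<Sum>w\<in>{w\<in>Omega Lam. cnt w = c}. q z w * (g w - g z)\<bar>"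
      using z by (simp add: gen_def level_def)
    also have "\<dots> \<le> (\<Sum>w\<in>{w\<in>Omega Lam. cnt w = c}. \<bar>q z w\<bar> * \<bar>g w - g z\<bar>)"
      unfolding abs_mult[symmetric] by (rule sum_abs)
    also have "\<dots> \<le> (\<Sum>w\<in>level c. \<bar>q z w\<bar> * \<bar>g w - g z\<bar>)"
      by (rule sum_mono2[OF finite_level]) (auto simp: level_def)
    also have "\<dots> \<le> (\<Sum>w\<in>level c. \<bar>q z w\<bar> * (2 * B))"
    proof (intro sum_mono mult_left_mono)
      show "\<bar>g w - g z\<bar> \<le> 2 * B" if "w \<in> level c" for w
        using g_le[OF that] g_le[OF z] by linarith
    qed simp
    finally show ?thesis
      by (simp add: sum_distrib_right)
  qed
  then have "(\<Sum>z\<in>level c. \<bar>gen Lam q g z\<bar>)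
      \<le> (\<Sum>z\<in>level c. (\<Sum>w\<in>level c. \<bar>q z w\<bar>) * (2 * B))"
    by (rule sum_mono)
  also have "\<dots> = K * B"
    unfolding K_def sum_distrib_right[symmetric] by simp
  finally show ?thesis
    unfolding B_def .
qed

lemma summable_expect:
  fixes q :: "('v::finite \<Rightarrow> nat) \<Rightarrow> ('v \<Rightarrow> nat) \<Rightarrow> real"
  shows "summable (\<lambda>n. t ^ n / fact n * (gen Lam q ^^ n) f e)"
proof -
  define c where "c = cnt e"
  define K where "K = 2 * (\<Sum>z\<in>level c. \<Sum>w\<in>level c. \<bar>q z w\<bar>)"
  define A where "A n = (\<Sum>z\<in>level c. \<bar>(gen Lam q ^^ n) f z\<bar>)" for n
  have "K \<ge> 0"
    unfolding K_def by (auto intro!: sum_nonneg)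
  have A_le: "A n \<le> K ^ n * A 0" for n
  proof (induction n)
    case 0
    then show ?case by simp
  next
    case (Suc n)
    have "A (Suc n) \<le> K * A n"
      unfolding A_def K_def using sum_level_abs_gen_le by simp
    also have "\<dots> \<le> K * (K ^ n * A 0)"
      using Suc \<open>K \<ge> 0\<close> by (rule mult_left_mono)
    finally show ?case by simp
  qed
  have "e \<in> level c"
    by (simp add: level_def c_def)
  then have "\<bar>(gen Lam q ^^ n) f e\<bar> \<le> A n" for n
    unfolding A_def using finite_level by (intro member_le_sum) auto
  then have bound: "\<bar>(gen Lam q ^^ n) f e\<bar> \<le> K ^ n * A 0" for n
    using A_le by (rule order.trans)
  have norm_le: "norm (t ^ n / fact n * (gen Lam q ^^ n) f e)
      \<le> A 0 * (inverse (fact n) * (\<bar>t\<bar> * K) ^ n)" for n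
  proof -
    have "norm (t ^ n / fact n * (gen Lam q ^^ n) f e)
        = \<bar>t\<bar> ^ n / fact n * \<bar>(gen Lam q ^^ n) f e\<bar>"
      by (simp add: abs_mult power_abs)
    also have "\<dots> \<le> \<bar>t\<bar> ^ n / fact n * (K ^ n * A 0)"
      using bound by (rule mult_left_mono) simp
    finally show ?thesis
      by (simp add: power_mult_distrib field_simps)
  qed
  have "summable (\<lambda>n. A 0 * (inverse (fact n) * (\<bar>t\<bar> * K) ^ n))"
    by (intro summable_mult summable_exp)
  then show ?thesis
    by (rule summable_comparison_test') (rule norm_le)
qed

lemma expect_mult_cnt: "expect Lam q t (\<lambda>z. h (cnt z) * f z) e = h (cnt e) * expect Lam q t f e"
  unfolding expect_def funpow_gen_mult_cnt
  by (subst suminf_mult[OF summable_expect, symmetric]) (simp add: mult_ac)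

lemma expect_annih:
  assumes "consistent Lam q" and "e \<in> Omega Lam"
  shows "expect Lam q t (annih f) e = annih (expect Lam q t f) e"
proof -
  have "expect Lam q t (annih f) e
      = (\<Sum>n. \<Sum>x\<in>UNIV. real (e x) * (t ^ n / fact n * (gen Lam q ^^ n) f (e - delta x)))"
    unfolding expect_def funpow_gen_annih[OF assms]
    by (simp add: annih_def sum_distrib_left mult_ac)
  also have "\<dots> = (\<Sum>x\<in>UNIV. \<Sum>n. real (e x) * (t ^ n / fact n * (gen Lam q ^^ n) f (e - delta x)))"
    by (rule suminf_sum) (intro summable_mult summable_expect)
  also have "\<dots> = annih (expect Lam q t f) e"
    unfolding annih_def expect_def by (simp only: suminf_mult[OF summable_expect])
  finally show ?thesis .
qed

theorem proposition3p6:
  fixes Lam :: "nat set"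
    and q :: "('v::finite \<Rightarrow> nat) \<Rightarrow> ('v \<Rightarrow> nat) \<Rightarrow> real"
    and eta xi :: "'v \<Rightarrow> nat"
    and t :: real
  assumes "\<forall>n\<in>Lam. \<forall>m\<le>n. m \<in> Lam"
    and "configuration_process Lam q"
    and "consistent Lam q"
    and "eta \<in> Omega Lam" and "xi \<in> Omega Lam"
    and "1 \<le> cnt xi" and "cnt xi < cnt eta"
    and "t \<ge> 0"
  shows "expect Lam q t (Fdual xi) eta
       = 1 / (real (cnt eta) - real (cnt xi))
         * (\<Sum>i\<in>UNIV. real (eta i) * expect Lam q t (Fdual xi) (eta - delta i))"
proof -
  have "annih (Fdual xi) = (\<lambda>z. (real (cnt z) - real (cnt xi)) * Fdual xi z)"
    by (intro ext annih_Fdual)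
  then have "(real (cnt eta) - real (cnt xi)) * expect Lam q t (Fdual xi) eta
      = expect Lam q t (annih (Fdual xi)) eta"
    by (simp add: expect_mult_cnt[where h = "\<lambda>k. real k - real (cnt xi)"])
  also have "\<dots> = (\<Sum>i\<in>UNIV. real (eta i) * expect Lam q t (Fdual xi) (eta - delta i))"
    unfolding expect_annih[OF assms(3,4)] annih_def ..
  finally show ?thesis
    using assms(7) by (simp add: field_simps)
qed

end
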